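(* Let $n\ge 3$, let $C_n$ be the cycle on vertices $1,\dots,n$ in cyclic order, and let $\Delta$ be its distance squared matrix, a circulant matrix whose first row is $(c_1,\dots,c_n)$ with $c_1=0$ and $c_i=c_{n+2-i}=(i-1)^2$ for $2\le i\le \lfloor n/2\rfloor+1$. For $j=1,\dots,n$ let $\lambda_j=\sum_{i=1}^n c_i\,\omega^{(i-1)j}$ with $\omega=e^{2\pi \mathrm{i}/n}$ (the eigenvalue of $\Delta$ for the eigenvector $(1,\omega^j,\omega^{2j},\dots,\omega^{(n-1)j})^T$). If $n=2r+1$ is odd, then \[ \lambda_j=2\cos(\pi j)\sum_{k=1}^{r}k^2\cos\!\left(\frac{(n-2k)\pi}{n}j\right) = 2\cos(\pi j)\left(\cos\!\left(\tfrac{(n-2)\pi}{n}j\right)+4\cos\!\left(\tfrac{(n-4)\pi}{n}j\right)+\cdots+\tfrac{(n-1)^2}{4}\cos\!\left(\tfrac{\pi}{n}j\right)\right). \] If $n=2m$ is even, then \[ \lambda_j=2\cos(\pi j)\left(\frac{n^2}{8}+\sum_{k=1}^{m-1}k^2\cos\!\left(\frac{(n-2k)\pi}{n}j\right)\right). \]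
   Context: For a connected graph with vertices $1,\dots,n$, the distance squared matrix is the $n\times n$ matrix with $(i,j)$ entry $d_{ij}^2$, where $d_{ij}$ is the graph distance between $i$ and $j$. *)

theory Defs
  imports "HOL-Analysis.Analysis"
begin

definition cycle_c :: "nat \<Rightarrow> nat \<Rightarrow> real" where
  "cycle_c n i = (if i = 1 then 0
                  else if 2 \<le> i \<and> i \<le> n div 2 + 1 then real ((i - 1)^2)
                  else real ((n + 1 - i)^2))"

definition cycle_Delta :: "nat \<Rightarrow> nat \<Rightarrow> nat \<Rightarrow> real" where
  "cycle_Delta n i j = cycle_c n ((j + n - i) mod n + 1)"

definition cycle_omega :: "nat \<Rightarrow> complex" where
  "cycle_omega n = exp (2 * pi * \<i> / of_nat n)"

definition cycle_lambda :: "nat \<Rightarrow> nat \<Rightarrow> complex" where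
  "cycle_lambda n j = (\<Sum>i=1..n. of_real (cycle_c n i) * cycle_omega n ^ ((i - 1) * j))"

end

theory Submission
  imports Defs
begin

text \<open>Since c is symmetric, c_{l+1} = c_{n-l+1}, the terms of lambda_j with indices l and n - l
  combine to l^2 (omega^{lj} + omega^{-lj}) = 2 l^2 cos (2 pi l j / n), and for integer j
  cos (2 pi l j / n) = cos (pi j) cos ((n - 2 l) pi j / n).  For odd n all terms with l > 0 pair up;
  for even n = 2m the unpaired middle term is m^2 omega^{mj} = m^2 cos (pi j) = 2 cos (pi j) n^2/8.\<close>

lemma sum_atLeastLessThan_fold_pairs:
  fixes f :: "nat \<Rightarrow> 'a::comm_monoid_add"
  assumes "2 * h < n"
  shows "(\<Sum>l\<in>{1..<n}. f l) = (\<Sum>k=1..h. f k + f (n - k)) + (\<Sum>l\<in>{h+1..<n-h}. f l)"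
proof -
  have split: "{1..<n} = {1..h} \<union> ({h+1..<n-h} \<union> {n-h..<n})"
    using assms by auto
  have reflect: "(\<Sum>l\<in>{n-h..<n}. f l) = (\<Sum>k=1..h. f (n - k))"
    using assms by (intro sum.reindex_bij_witness[of _ "\<lambda>k. n - k" "\<lambda>l. n - l"]) auto
  have "(\<Sum>l\<in>{1..<n}. f l) = (\<Sum>k=1..h. f k) + ((\<Sum>l\<in>{h+1..<n-h}. f l) + (\<Sum>l\<in>{n-h..<n}. f l))"
    unfolding split using assms by (subst sum.union_disjoint; auto simp: sum.union_disjoint)
  then show ?thesis
    unfolding reflect sum.distrib by (simp add: ac_simps)
qed

lemma cos_pi_mult_cos_pi_minus: "cos (pi * real j) * cos (pi * real j - x) = cos x"
proof -
  have "sin (pi * real j) = 0"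
    using sin_npi[of j] by (simp add: mult.commute)
  moreover have "cos (pi * real j) * cos (pi * real j) = 1"
    using cos_npi[of j] by (simp add: mult.commute power_mult_distrib[symmetric])
  ultimately show ?thesis
    by (simp add: cos_diff mult.assoc[symmetric])
qed

lemma cycle_omega_power: "cycle_omega n ^ a = cis (2 * pi * real a / real n)"
  unfolding cycle_omega_def cis_conv_exp exp_of_nat_mult[symmetric]
  by (simp add: algebra_simps)

lemma cycle_omega_power_add_reflect:
  assumes "n > 0" "k \<le> n"
  shows "cycle_omega n ^ (k * j) + cycle_omega n ^ ((n - k) * j)
    = of_real (2 * cos (2 * pi * real k * real j / real n))"
proof -
  define x where "x = 2 * pi * real k * real j / real n"
  have "cycle_omega n ^ (k * j) = cis x"
    unfolding cycle_omega_power x_def by (simp add: mult.assoc)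
  moreover have "cycle_omega n ^ ((n - k) * j) = cis (- x)"
  proof -
    have angle: "2 * pi * real ((n - k) * j) / real n = 2 * pi * real j + - x"
      using assms by (simp add: x_def of_nat_diff left_diff_distrib right_diff_distrib diff_divide_distrib)
    show ?thesis
      unfolding cycle_omega_power angle cis_mult[symmetric] by simp
  qed
  moreover have "cis x + cis (- x) = of_real (2 * cos x)"
    by (simp add: complex_eq_iff)
  ultimately show ?thesis
    unfolding x_def by simp
qed

lemma cycle_omega_power_half:
  assumes "n = 2 * m" "m > 0"
  shows "cycle_omega n ^ (m * j) = of_real (cos (pi * real j))"
proof -
  have "sin (pi * real j) = 0"
    using sin_npi[of j] by (simp add: mult.commute)
  moreover have "2 * pi * real (m * j) / real n = pi * real j"
    using assms by simp
  ultimately show ?thesis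
    unfolding cycle_omega_power by (simp add: complex_eq_iff)
qed

lemma cycle_c_Suc:
  assumes "1 \<le> k" "k \<le> n div 2"
  shows "cycle_c n (k + 1) = real k ^ 2"
  using assms by (simp add: cycle_c_def)

lemma cycle_c_reflect:
  assumes "1 \<le> k" "k \<le> n div 2"
  shows "cycle_c n (n - k + 1) = real k ^ 2"
proof (cases "n - k = k")
  case True
  then show ?thesis
    using assms unfolding cycle_c_def by auto
next
  case False
  then have "\<not> n - k + 1 \<le> n div 2 + 1" "n + 1 - (n - k + 1) = k" "n - k + 1 \<noteq> 1"
    using assms by auto
  then show ?thesis
    unfolding cycle_c_def by simp
qed

definition lambda_summand :: "nat \<Rightarrow> nat \<Rightarrow> nat \<Rightarrow> complex" where
  "lambda_summand n j l = of_real (cycle_c n (l + 1)) * cycle_omega n ^ (l * j)"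

lemma cycle_lambda_eq_sum_summands:
  assumes "n > 0"
  shows "cycle_lambda n j = (\<Sum>l\<in>{1..<n}. lambda_summand n j l)"
proof -
  have "cycle_lambda n j = (\<Sum>l<n. lambda_summand n j l)"
    unfolding cycle_lambda_def lambda_summand_def
    by (rule sum.reindex_bij_witness[of _ Suc "\<lambda>i. i - 1"]) auto
  also have "\<dots> = lambda_summand n j 0 + (\<Sum>l\<in>{1..<n}. lambda_summand n j l)"
    using assms by (simp add: lessThan_atLeast0 sum.atLeast_Suc_lessThan)
  finally show ?thesis
    by (simp add: lambda_summand_def cycle_c_def)
qed

lemma lambda_summand_add_reflect:
  assumes "1 \<le> k" "2 * k \<le> n"
  shows "lambda_summand n j k + lambda_summand n j (n - k)
    = of_real (2 * cos (pi * real j) * (real k ^ 2 * cos (real (n - 2 * k) * pi / real n * real j)))"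
proof -
  have k: "k \<le> n div 2" "n > 0" "k \<le> n"
    using assms by auto
  have angle: "real (n - 2 * k) * pi / real n * real j = pi * real j - 2 * pi * real k * real j / real n"
    using assms by (simp add: of_nat_diff left_diff_distrib diff_divide_distrib)
  have "cos (2 * pi * real k * real j / real n)
      = cos (pi * real j) * cos (real (n - 2 * k) * pi / real n * real j)"
    unfolding angle by (rule cos_pi_mult_cos_pi_minus[symmetric])
  moreover have "lambda_summand n j k + lambda_summand n j (n - k)
      = of_real (real k ^ 2) * (cycle_omega n ^ (k * j) + cycle_omega n ^ ((n - k) * j))"
    unfolding lambda_summand_def cycle_c_Suc[OF assms(1) k(1)] cycle_c_reflect[OF assms(1) k(1)]
    by (simp add: distrib_left)
  ultimately show ?thesis
    unfolding cycle_omega_power_add_reflect[OF k(2,3)] of_real_mult[symmetric] by (simp add: ac_simps)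
qed

lemma lambda_summand_half:
  assumes "n = 2 * m" "m > 0"
  shows "lambda_summand n j m = of_real (2 * cos (pi * real j) * (real n ^ 2 / 8))"
proof -
  have "cycle_c n (m + 1) = real m ^ 2"
    using assms by (intro cycle_c_Suc) auto
  then show ?thesis
    using assms unfolding lambda_summand_def cycle_omega_power_half[OF assms]
    by (simp add: power2_eq_square)
qed

theorem theorem5p2:
  fixes n j :: nat
  assumes "n \<ge> 3" and "1 \<le> j" and "j \<le> n"
  shows "(\<forall>r. n = 2 * r + 1 \<longrightarrow>
            cycle_lambda n j = of_real (2 * cos (pi * real j) *
              (\<Sum>k=1..r. real k ^ 2 * cos (real (n - 2 * k) * pi / real n * real j))))
       \<and> (\<forall>m. n = 2 * m \<longrightarrow>
            cycle_lambda n j = of_real (2 * cos (pi * real j) *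
              (real n ^ 2 / 8 + (\<Sum>k=1..m - 1. real k ^ 2 * cos (real (n - 2 * k) * pi / real n * real j)))))"
proof -
  let ?pair = "\<lambda>k. of_real (2 * cos (pi * real j) *
    (real k ^ 2 * cos (real (n - 2 * k) * pi / real n * real j))) :: complex"
  have "n > 0"
    using assms by simp
  have lambda: "cycle_lambda n j = (\<Sum>k=1..h. ?pair k) + (\<Sum>l\<in>{h+1..<n-h}. lambda_summand n j l)"
    if "2 * h < n" for h
  proof -
    have "(\<Sum>k=1..h. lambda_summand n j k + lambda_summand n j (n - k)) = (\<Sum>k=1..h. ?pair k)"
      using that by (intro sum.cong refl lambda_summand_add_reflect) auto
    then show ?thesis
      unfolding cycle_lambda_eq_sum_summands[OF \<open>n > 0\<close>] sum_atLeastLessThan_fold_pairs[OF that]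
      by (rule arg_cong[where f = "\<lambda>s. s + _"])
  qed
  show ?thesis
  proof (intro conjI allI impI)
    fix r assume "n = 2 * r + 1"
    with lambda[of r] show "cycle_lambda n j = of_real (2 * cos (pi * real j) *
        (\<Sum>k=1..r. real k ^ 2 * cos (real (n - 2 * k) * pi / real n * real j)))"
      by (simp add: sum_distrib_left)
  next
    fix m assume m: "n = 2 * m"
    with \<open>n > 0\<close> have "m > 0"
      by simp
    with m have "2 * (m - 1) < n" "{m - 1 + 1..<n - (m - 1)} = {m}"
      by auto
    with lambda have "cycle_lambda n j = lambda_summand n j m + (\<Sum>k=1..m - 1. ?pair k)"
      by (simp add: add.commute)
    then show "cycle_lambda n j = of_real (2 * cos (pi * real j) *
        (real n ^ 2 / 8 + (\<Sum>k=1..m - 1. real k ^ 2 * cos (real (n - 2 * k) * pi / real n * real j))))"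
      unfolding lambda_summand_half[OF m \<open>m > 0\<close>] distrib_left sum_distrib_left of_real_add of_real_sum .
  qed
qed

end
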